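(* Let $q$ be a prime power, $m\ge1$, and let $\mathrm{Tr}:\mathrm{GF}(q^m)\to\mathrm{GF}(q)$, $\mathrm{Tr}(a)=a+a^q+\cdots+a^{q^{m-1}}$, be the trace map. Let $a_0,a_1,\ldots,a_{q-1}\in\mathrm{GF}(q^m)$. Then $\mathrm{Tr}(a_0+\lambda a_1+\lambda^2a_2+\cdots+\lambda^{q-1}a_{q-1})=0$ for all $\lambda\in\mathrm{GF}(q^m)$ if and only if $\mathrm{Tr}(a_0)=0$ and $a_1=a_2=\cdots=a_{q-1}=0$. *)

theory Defs
  imports Main "HOL-Computational_Algebra.Primes"
begin

text \<open>The finite field GF(q^m) is modelled as a finite field type of cardinality q^m;
  GF(q) is its unique subfield of order q, so Tr(a) = 0 is an equation in the big field.\<close>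
definition gf_trace :: "nat \<Rightarrow> nat \<Rightarrow> 'a::field \<Rightarrow> 'a" where
  "gf_trace q m a = (\<Sum>i<m. a ^ (q ^ i))"

end

theory Submission
  imports Defs "HOL-Number_Theory.Residues" "HOL-Computational_Algebra.Polynomial"
begin

text \<open>Since q is a power of the characteristic, the Frobenius map x \<mapsto> x^(q^j) is additive,
  so \<lambda> \<mapsto> Tr(a_0 + \<lambda> a_1 + ... + \<lambda>^(q-1) a_(q-1)) is the polynomial function of
  T = \<Sum>_(j<m) \<Sum>_(i<q) a_i^(q^j) X^(i q^j). Its degree is below q^m, the size of the field, so
  it vanishes everywhere only if T = 0. The exponents i q^j are base-q numbers with a single
  digit: the constant coefficient of T is Tr(a_0), and for 0 < d < q the coefficient of X^d is
  a_d alone.\<close>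

lemma CHAR_eq_if_card_eq_prime_power:
  assumes "prime p" "card (UNIV :: 'a::{field,finite} set) = p ^ n"
  shows "CHAR('a) = p"
proof -
  have prime_CHAR: "prime CHAR('a)"
    by (rule prime_CHAR_semidom, rule finite_imp_CHAR_pos) simp
  have "CHAR('a) dvd p ^ n"
    using CHAR_dvd_CARD assms(2) by metis
  then have "CHAR('a) dvd p"
    using prime_CHAR prime_dvd_power by blast
  then show ?thesis
    using prime_CHAR assms(1) primes_dvd_imp_eq by blast
qed

lemma poly_eq_0_if_vanishes_on_finite_field:
  fixes P :: "'a::{field,finite} poly"
  assumes "degree P < card (UNIV :: 'a set)" and "\<And>x. poly P x = 0"
  shows "P = 0"
proof (rule ccontr)
  assume "P \<noteq> 0"
  then have "card {x. poly P x = 0} \<le> degree P"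
    by (rule card_poly_roots_bound)
  then show False
    using assms by simp
qed

lemma mult_power_less_power:
  fixes i j q m :: nat
  assumes "i < q" "j < m"
  shows "i * q ^ j < q ^ m"
proof -
  have "i * q ^ j < q ^ Suc j"
    using assms(1) by simp
  also have "\<dots> \<le> q ^ m"
    using assms by (intro power_increasing) auto
  finally show ?thesis .
qed

lemma mult_power_eq_digit_iff:
  fixes i j q d :: nat
  assumes "0 < d" "d < q"
  shows "i * q ^ j = d \<longleftrightarrow> i = d \<and> j = 0"
proof (cases "i = 0 \<or> j = 0")
  case False
  then have "q \<le> q ^ j"
    using assms by (intro self_le_power) auto
  also have "\<dots> \<le> i * q ^ j"
    using False by simp
  finally show ?thesis
    using False assms by auto
qed (use assms in auto)

definition trace_poly :: "nat \<Rightarrow> nat \<Rightarrow> (nat \<Rightarrow> 'a::comm_semiring_1) \<Rightarrow> 'a poly" where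
  "trace_poly q m c = (\<Sum>j<m. \<Sum>i<q. monom (c i ^ q ^ j) (i * q ^ j))"

lemma coeff_trace_poly:
  "coeff (trace_poly q m c) n = (\<Sum>j<m. \<Sum>i<q. if i * q ^ j = n then c i ^ q ^ j else 0)"
  by (simp add: trace_poly_def coeff_sum coeff_monom)

lemma poly_trace_poly:
  fixes c :: "nat \<Rightarrow> 'a::field"
  assumes "prime CHAR('a)" "q = CHAR('a) ^ k"
  shows "poly (trace_poly q m c) x = gf_trace q m (\<Sum>i<q. x ^ i * c i)"
proof -
  have frobenius: "(\<Sum>i\<in>A. f i) ^ q ^ j = (\<Sum>i\<in>A. f i ^ q ^ j)" for f :: "nat \<Rightarrow> 'a" and A j
    by (rule freshmans_dream_sum'[OF assms(1), of _ "k * j"]) (simp add: assms(2) power_mult)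
  show ?thesis
    unfolding trace_poly_def gf_trace_def
    by (simp add: poly_sum poly_monom frobenius power_mult_distrib power_mult mult.commute)
qed

lemma degree_trace_poly_less:
  assumes "q \<ge> 2"
  shows "degree (trace_poly q m c) < q ^ m"
proof -
  have "degree (trace_poly q m c) \<le> q ^ m - 1"
  proof (rule degree_le, intro allI impI)
    fix n assume "q ^ m - 1 < n"
    then have "i * q ^ j \<noteq> n" if "i < q" "j < m" for i j
      using mult_power_less_power[OF that] by linarith
    then show "coeff (trace_poly q m c) n = 0"
      unfolding coeff_trace_poly by (intro sum.neutral ballI) auto
  qed
  moreover have "q ^ m > 0"
    using assms by simp
  ultimately show ?thesis
    by linarith
qed

lemma coeff_0_trace_poly:
  fixes c :: "nat \<Rightarrow> 'a::field"
  assumes "q \<ge> 1"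
  shows "coeff (trace_poly q m c) 0 = gf_trace q m (c 0)"
proof -
  have "coeff (trace_poly q m c) 0 = (\<Sum>j<m. \<Sum>i<q. if i = 0 then c i ^ q ^ j else 0)"
    unfolding coeff_trace_poly using assms by (intro sum.cong refl) auto
  also have "\<dots> = gf_trace q m (c 0)"
    using assms by (simp add: gf_trace_def)
  finally show ?thesis .
qed

lemma coeff_digit_trace_poly:
  assumes "0 < d" "d < q" "m \<ge> 1"
  shows "coeff (trace_poly q m c) d = c d"
proof -
  have "coeff (trace_poly q m c) d = (\<Sum>j<m. if j = 0 then c d else 0)"
    unfolding coeff_trace_poly mult_power_eq_digit_iff[OF assms(1,2)]
    by (intro sum.cong refl) (auto simp: assms(2) if_distrib[of "\<lambda>b. b \<and> _"] sum.delta')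
  also have "\<dots> = c d"
    using assms(3) by simp
  finally show ?thesis .
qed

theorem lemma2:
  fixes a :: "nat \<Rightarrow> 'a::{field,finite}" and q m :: nat
  assumes "\<exists>p k. prime p \<and> k \<ge> 1 \<and> q = p ^ k"
    and "m \<ge> 1"
    and "card (UNIV :: 'a set) = q ^ m"
  shows "(\<forall>l::'a. gf_trace q m (\<Sum>i<q. l ^ i * a i) = 0) \<longleftrightarrow>
         (gf_trace q m (a 0) = 0 \<and> (\<forall>i\<in>{1..q-1}. a i = 0))"
proof -
  obtain p k where "prime p" "k \<ge> 1" and q: "q = p ^ k"
    using assms(1) by blast
  have "2 \<le> p"
    using \<open>prime p\<close> by (rule prime_ge_2_nat)
  also have "p \<le> q"
    using prime_gt_0_nat[OF \<open>prime p\<close>] \<open>k \<ge> 1\<close> by (simp add: q self_le_power)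
  finally have "q \<ge> 2" .
  have "CHAR('a) = p"
    using assms(3) by (intro CHAR_eq_if_card_eq_prime_power[OF \<open>prime p\<close>, of "k * m"])
      (simp add: q power_mult)
  then have CHAR: "prime CHAR('a)" "q = CHAR('a) ^ k"
    using \<open>prime p\<close> q by simp_all
  show ?thesis
  proof
    assume "\<forall>l::'a. gf_trace q m (\<Sum>i<q. l ^ i * a i) = 0"
    then have "trace_poly q m a = 0"
      using \<open>q \<ge> 2\<close> assms(3)
      by (intro poly_eq_0_if_vanishes_on_finite_field)
        (simp_all add: degree_trace_poly_less poly_trace_poly[OF CHAR])
    then show "gf_trace q m (a 0) = 0 \<and> (\<forall>i\<in>{1..q-1}. a i = 0)"
      using coeff_0_trace_poly[of q m a] coeff_digit_trace_poly[of _ q m a] \<open>q \<ge> 2\<close> assms(2)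
      by auto
  next
    assume vanishing: "gf_trace q m (a 0) = 0 \<and> (\<forall>i\<in>{1..q-1}. a i = 0)"
    then have "a i = 0" if "0 < i" "i < q" for i
      using that by auto
    then have "(\<Sum>i<q. l ^ i * a i) = (\<Sum>i\<in>{0}. l ^ i * a i)" for l :: 'a
      using \<open>q \<ge> 2\<close> by (intro sum.mono_neutral_right) auto
    with vanishing show "\<forall>l::'a. gf_trace q m (\<Sum>i<q. l ^ i * a i) = 0"
      by simp
  qed
qed

end
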